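(* Let $p\in\mathbb{N}$, $\xi_k=\frac{k}{p}\pi$ for $k=0,\dots,p$, and let $\beta=(\beta_0,\dots,\beta_p)\in\mathbb{R}^{p+1}$. Define $g(\xi)=\sum_{j=0}^p\beta_j\cos(j\xi)$ and $\mathbf{g}=(g(\xi_0),\dots,g(\xi_p))\in\mathbb{R}^{p+1}$. Then $\|\beta\|_2\le\frac{2}{\sqrt{p+1}}\|\mathbf{g}\|_2$. *)

theory Defs
  imports "HOL-Analysis.Analysis"
begin

end

theory Submission
  imports Defs
begin

text \<open>
  Weight the nodes \<open>\<xi>\<^sub>k = k\<pi>/p\<close> by the trapezoidal rule (weight \<open>1/2\<close> at both ends).
  For this weighting the vectors \<open>(cos (j \<xi>\<^sub>k))\<^sub>k\<close>, \<open>j = 0, \<dots>, p\<close>, are orthogonal, with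
  squared norms \<open>p\<close> or \<open>p/2\<close>; this follows from the closed form of the Dirichlet kernel.
  Hence the weighted norm of \<open>g\<close> satisfies \<open>(p/2) \<parallel>\<beta>\<parallel>\<^sup>2 \<le> \<Sum>\<^sub>k w\<^sub>k g(\<xi>\<^sub>k)\<^sup>2 \<le> \<parallel>g\<parallel>\<^sup>2\<close>, and
  \<open>2/p \<le> 4/(p+1)\<close> for \<open>p \<ge> 1\<close>.
\<close>

lemma sin_half_mult_sum_cos:
  fixes a :: real
  shows "2 * sin (a/2) * (\<Sum>k=0..n. cos (real k * a)) = sin ((real n + 1/2) * a) + sin (a/2)"
proof (induction n)
  case 0
  then show ?case by simp
next
  case (Suc n)
  have "2 * sin (a/2) * cos ((real n + 1) * a)
      = sin ((real n + 1) * a + a/2) - sin ((real n + 1) * a - a/2)"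
    by (simp add: sin_add sin_diff)
  also have "\<dots> = sin ((real (Suc n) + 1/2) * a) - sin ((real n + 1/2) * a)"
    by (simp add: algebra_simps)
  finally show ?case
    using Suc by (simp add: distrib_left add.commute)
qed

definition trapezoid_weight :: "nat \<Rightarrow> nat \<Rightarrow> real" where
  "trapezoid_weight p k = (if k = 0 \<or> k = p then 1/2 else 1)"

lemma sum_trapezoid_weight_eq:
  assumes "p \<ge> 1"
  shows "(\<Sum>k=0..p. trapezoid_weight p k * f k) = (\<Sum>k=0..p. f k) - f 0 / 2 - f p / 2"
proof -
  have "(\<Sum>k=0..p. trapezoid_weight p k * f k)
      = (\<Sum>k=0..p. f k - (if k = 0 then f 0 / 2 else 0) - (if k = p then f p / 2 else 0))"
    using assms by (intro sum.cong) (auto simp: trapezoid_weight_def)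
  then show ?thesis
    by (simp add: sum_subtractf)
qed

lemma sum_trapezoid_weight:
  assumes "p \<ge> 1"
  shows "(\<Sum>k=0..p. trapezoid_weight p k) = real p"
  using sum_trapezoid_weight_eq[OF assms, of "\<lambda>_. 1"] by simp

lemma sin_half_mult_trapezoid_sum_cos:
  fixes a :: real
  assumes "p \<ge> 1"
  shows "2 * sin (a/2) * (\<Sum>k=0..p. trapezoid_weight p k * cos (real k * a))
    = sin (real p * a) * cos (a/2)"
proof -
  have "sin ((real p + 1/2) * a) = sin (real p * a + a/2)"
    by (simp add: algebra_simps)
  then show ?thesis
    using sin_half_mult_sum_cos[of a p]
    by (simp add: sum_trapezoid_weight_eq[OF assms] algebra_simps sin_add)
qed

lemma trapezoid_sum_cos_eq_0:
  assumes "p \<ge> 1" and "\<not> 2 * int p dvd m"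
  shows "(\<Sum>k=0..p. trapezoid_weight p k * cos (of_int m * (real k / real p * pi))) = 0"
proof -
  define a where "a = of_int m * pi / real p"
  have "sin (real p * a) = 0"
    using assms(1) by (simp add: a_def sin_times_pi_eq_0)
  moreover have "sin (a/2) \<noteq> 0"
  proof
    assume "sin (a/2) = 0"
    then obtain i where "a/2 = of_int i * pi"
      by (auto simp: sin_zero_iff_int2)
    then have "of_int m = (of_int (2 * int p * i) :: real)"
      using assms(1) by (simp add: a_def field_simps)
    then have "m = 2 * int p * i"
      by (simp only: of_int_eq_iff)
    with assms(2) show False
      by simp
  qed
  moreover have "of_int m * (real k / real p * pi) = real k * a" for k
    by (simp add: a_def)
  ultimately show ?thesis
    using sin_half_mult_trapezoid_sum_cos[OF assms(1), of a] by simp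
qed

lemma not_dvd_if_abs_less:
  fixes m n :: int
  assumes "m \<noteq> 0" and "\<bar>m\<bar> < n"
  shows "\<not> n dvd m"
  using zdvd_not_zless[of "\<bar>m\<bar>" n] assms by (simp add: dvd_abs_iff)

text \<open>The frequencies are integers so that \<open>j - l\<close> is not truncated.\<close>

lemma cos_mult_cos_int:
  fixes x :: real
  shows "cos (real j * x) * cos (real l * x)
    = (cos (of_int (int j - int l) * x) + cos (of_int (int j + int l) * x)) / 2"
  by (simp add: cos_times_cos algebra_simps)

lemma trapezoid_cos_orthogonal:
  assumes "p \<ge> 1" and "j \<le> p" "l \<le> p" "j \<noteq> l"
  shows "(\<Sum>k=0..p. trapezoid_weight p k *
            (cos (real j * (real k / real p * pi)) * cos (real l * (real k / real p * pi)))) = 0"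
proof -
  have "\<not> 2 * int p dvd (int j - int l)" "\<not> 2 * int p dvd (int j + int l)"
    using assms by (intro not_dvd_if_abs_less; simp)+
  from this[THEN trapezoid_sum_cos_eq_0[OF assms(1)]] show ?thesis
    unfolding cos_mult_cos_int
    by (simp add: distrib_left add_divide_distrib sum.distrib flip: sum_divide_distrib)
qed

lemma trapezoid_cos_square_ge:
  assumes "p \<ge> 1" and "j \<le> p"
  shows "(\<Sum>k=0..p. trapezoid_weight p k * (cos (real j * (real k / real p * pi)))\<^sup>2) \<ge> real p / 2"
proof (cases "j = 0 \<or> j = p")
  case True
  then have "(cos (real j * (real k / real p * pi)))\<^sup>2 = 1" for k
    using assms(1) by (auto simp: cos_npi power_mult_distrib[symmetric] simp flip: power_mult)
  then show ?thesis
    using sum_trapezoid_weight[OF assms(1)] by simp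
next
  case False
  then have "\<not> 2 * int p dvd (int j + int j)"
    using assms by (intro not_dvd_if_abs_less) auto
  from trapezoid_sum_cos_eq_0[OF assms(1) this]
  have "(\<Sum>k=0..p. trapezoid_weight p k * (cos (real j * (real k / real p * pi)))\<^sup>2) = real p / 2"
    unfolding power2_eq_square cos_mult_cos_int
    using sum_trapezoid_weight[OF assms(1)]
    by (simp add: distrib_left add_divide_distrib sum.distrib flip: sum_divide_distrib)
  then show ?thesis
    by simp
qed

lemma weighted_sum_square_orthogonal:
  fixes w :: "'k \<Rightarrow> real" and c :: "'j \<Rightarrow> 'k \<Rightarrow> real" and \<beta> :: "'j \<Rightarrow> real"
  assumes "finite J"
    and orth: "\<And>j l. j \<in> J \<Longrightarrow> l \<in> J \<Longrightarrow> j \<noteq> l \<Longrightarrow> (\<Sum>k\<in>K. w k * (c j k * c l k)) = 0"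
  shows "(\<Sum>k\<in>K. w k * (\<Sum>j\<in>J. \<beta> j * c j k)\<^sup>2) = (\<Sum>j\<in>J. (\<beta> j)\<^sup>2 * (\<Sum>k\<in>K. w k * (c j k)\<^sup>2))"
proof -
  let ?S = "\<lambda>j l. \<Sum>k\<in>K. w k * (c j k * c l k)"
  have diagonal: "(\<Sum>l\<in>J. \<beta> j * \<beta> l * ?S j l) = \<beta> j * \<beta> j * ?S j j" if "j \<in> J" for j
  proof -
    have "(\<Sum>l\<in>J. \<beta> j * \<beta> l * ?S j l) = (\<Sum>l\<in>J. if l = j then \<beta> j * \<beta> j * ?S j j else 0)"
      using orth that by (intro sum.cong) auto
    then show ?thesis
      using assms(1) that by simp
  qed
  have "(\<Sum>k\<in>K. w k * (\<Sum>j\<in>J. \<beta> j * c j k)\<^sup>2)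
      = (\<Sum>k\<in>K. \<Sum>j\<in>J. \<Sum>l\<in>J. \<beta> j * \<beta> l * (w k * (c j k * c l k)))"
    by (simp only: power2_eq_square sum_product sum_distrib_left mult_ac)
  also have "\<dots> = (\<Sum>j\<in>J. \<Sum>l\<in>J. \<beta> j * \<beta> l * ?S j l)"
    by (simp only: sum_distrib_left sum.swap[of _ K] sum.swap[of _ K J])
  also have "\<dots> = (\<Sum>j\<in>J. \<beta> j * \<beta> j * ?S j j)"
    by (rule sum.cong) (simp_all add: diagonal)
  finally show ?thesis
    by (simp add: power2_eq_square)
qed

theorem mainTheorem16:
  fixes p :: nat and \<beta> :: "nat \<Rightarrow> real"
  defines "\<xi> \<equiv> (\<lambda>k::nat. real k / real p * pi)"
  defines "g \<equiv> (\<lambda>x::real. \<Sum>j=0..p. \<beta> j * cos (real j * x))"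
  shows "sqrt (\<Sum>j=0..p. (\<beta> j)\<^sup>2) \<le> 2 / sqrt (real p + 1) * sqrt (\<Sum>k=0..p. (g (\<xi> k))\<^sup>2)"
proof (cases "p = 0")
  case True
  then show ?thesis
    by (simp add: g_def \<xi>_def)
next
  case False
  then have p: "p \<ge> 1"
    by simp
  define B where "B = (\<Sum>j=0..p. (\<beta> j)\<^sup>2)"
  define G where "G = (\<Sum>k=0..p. (g (\<xi> k))\<^sup>2)"
  have "B * (real p / 2)
      \<le> (\<Sum>j=0..p. (\<beta> j)\<^sup>2 * (\<Sum>k=0..p. trapezoid_weight p k * (cos (real j * \<xi> k))\<^sup>2))"
    unfolding B_def sum_distrib_right \<xi>_def
    using trapezoid_cos_square_ge[OF p] by (intro sum_mono mult_left_mono) auto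
  also have "\<dots> = (\<Sum>k=0..p. trapezoid_weight p k * (g (\<xi> k))\<^sup>2)"
    unfolding g_def \<xi>_def
    by (intro weighted_sum_square_orthogonal[symmetric] finite_atLeastAtMost
        trapezoid_cos_orthogonal[OF p]) auto
  also have "\<dots> \<le> G"
    unfolding G_def by (intro sum_mono) (auto simp: trapezoid_weight_def)
  finally have "B * real p \<le> 2 * G"
    by simp
  moreover have "B \<le> B * real p"
    using p mult_left_mono[of 1 "real p" B] by (simp add: B_def sum_nonneg)
  ultimately have "B \<le> 4 / (real p + 1) * G"
    by (simp add: field_simps)
  then have "sqrt B \<le> sqrt (4 / (real p + 1) * G)"
    by (rule real_sqrt_le_mono)
  then show ?thesis
    by (simp add: B_def G_def real_sqrt_mult real_sqrt_divide)
qed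

end
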